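(* Let $C\subseteq\mathbb{R}^n$ be a nonempty closed convex set and $D\subseteq\mathbb{R}^n$ a nonempty compact set. Given $x^0\in\mathbb{R}^n$ and $\gamma\in(0,\frac1{12})$, consider the iteration \[ y^{t+1}=\frac{\gamma P_C\!\left(\frac{x^t}{1+5\gamma}\right)+x^t}{6\gamma+1},\qquad z^{t+1}\in P_D\!\left(\frac{2y^{t+1}-x^t}{1-5\gamma}\right),\qquad x^{t+1}=x^t+2(z^{t+1}-y^{t+1}). \] Then $\{(y^t,z^t,x^t)\}$ is bounded, and every cluster point $(\bar y,\bar z,\bar x)$ satisfies $\bar y=\bar z$ and $0\in\nabla F(\bar z)+\partial\delta_D(\bar z)$, where $F=\frac12 d_C^2$; i.e., $\bar z$ is a stationary point of $\min_u \frac12 d_C^2(u)+\delta_D(u)$.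
   Context: $d_C$ is the Euclidean distance to $C$, $P_C$ the projection onto $C$, $P_D(x)$ the (possibly multivalued) set of points of $D$ nearest to $x$ (any element may be chosen), and $\delta_D$ the indicator function of $D$ ($0$ on $D$, $+\infty$ outside). $\partial\delta_D$ is the limiting subdifferential: $v\in\partial h(x)$ iff there exist $x^t\to x$ with $h(x^t)\to h(x)$ and $v^t\to v$ such that $\liminf_{z\to x^t, z\ne x^t}\frac{h(z)-h(x^t)-\langle v^t,z-x^t\rangle}{\|z-x^t\|}\ge0$ for each $t$. *)

theory Defs
  imports "HOL-Analysis.Analysis" "HOL-Library.Extended_Real"
begin

definition proj_set :: "'a::metric_space set \<Rightarrow> 'a \<Rightarrow> 'a set" where
  "proj_set D w = {d \<in> D. \<forall>e\<in>D. dist w d \<le> dist w e}"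

definition indicator_fun :: "'a set \<Rightarrow> 'a \<Rightarrow> ereal" where
  "indicator_fun D u = (if u \<in> D then 0 else \<infinity>)"

definition frechet_subdiff :: "('a::real_inner \<Rightarrow> ereal) \<Rightarrow> 'a \<Rightarrow> 'a set" where
  "frechet_subdiff h x = {v. \<bar>h x\<bar> \<noteq> \<infinity> \<and>
     Liminf (at x) (\<lambda>z. (h z - h x - ereal (v \<bullet> (z - x))) / ereal (norm (z - x))) \<ge> 0}"

definition limiting_subdiff :: "('a::real_inner \<Rightarrow> ereal) \<Rightarrow> 'a \<Rightarrow> 'a set" where
  "limiting_subdiff h x = {v. \<exists>xs vs. xs \<longlonglongrightarrow> x \<and> (\<lambda>t. h (xs t)) \<longlonglongrightarrow> h x \<and>
     vs \<longlonglongrightarrow> v \<and> (\<forall>t. vs t \<in> frechet_subdiff h (xs t))}"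

end

theory Submission
  imports Defs
begin

text \<open>
  The iteration is the Douglas--Rachford splitting method for \<open>f + g\<close> with
  \<open>f = d\<^sub>C\<^sup>2 / 2 + 5 \<parallel>\<cdot>\<parallel>\<^sup>2 / 2\<close> and \<open>g = \<delta>\<^sub>D - 5 \<parallel>\<cdot>\<parallel>\<^sup>2 / 2\<close>: the \<open>y\<close>-step is the proximal step of
  \<open>\<gamma> f\<close> (the projection onto \<open>C\<close> is constant along the normal ray through \<open>P\<^sub>C(x / (1 + 5\<gamma>))\<close>)
  and the \<open>z\<close>-step is the proximal step of \<open>\<gamma> g\<close>. As \<open>f\<close> is 5-strongly convex with a 6-Lipschitz
  gradient, for \<open>\<gamma> < 1/12\<close> the Douglas--Rachford merit function drops by at least
  \<open>\<gamma> \<parallel>y\<^sup>t\<^sup>+\<^sup>2 - y\<^sup>t\<^sup>+\<^sup>1\<parallel>\<^sup>2\<close> per step. The norms \<open>\<parallel>x\<^sup>t\<parallel>\<close> obey an affine recursion with contraction factor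
  \<open>(1 - 5\<gamma>) / (1 + 5\<gamma>)\<close>, so the iterates are bounded and the merit function is bounded below; hence
  the increments of \<open>y\<close> are square summable and \<open>z\<^sup>t - y\<^sup>t \<rightarrow> 0\<close>. At a cluster point, the optimality
  condition of the \<open>z\<close>-step (a proximal, hence Frechet, normal to \<open>D\<close>) passes to the limit and
  gives \<open>P\<^sub>C z - z \<in> \<partial>\<delta>\<^sub>D z\<close>, while the gradient of \<open>d\<^sub>C\<^sup>2 / 2\<close> at \<open>z\<close> is \<open>z - P\<^sub>C z\<close>.
\<close>

section \<open>Projection onto a closed convex set\<close>

lemma norm_diff_sq_expand:
  fixes u v :: "'a::real_inner"
  shows "(norm (u - v))\<^sup>2 = (norm u)\<^sup>2 - 2 * inner u v + (norm v)\<^sup>2"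
  by (simp add: power2_norm_eq_inner inner_diff_left inner_diff_right inner_commute)

lemma closest_point_eqI:
  fixes C :: "'a::euclidean_space set"
  assumes "closed C" "convex C" "p \<in> C" and normal: "\<And>c. c \<in> C \<Longrightarrow> inner (q - p) (c - p) \<le> 0"
  shows "closest_point C q = p"
proof -
  have "dist q p \<le> dist q c" if "c \<in> C" for c
  proof -
    have "(norm (q - c))\<^sup>2 = (norm (q - p))\<^sup>2 - 2 * inner (q - p) (c - p) + (norm (c - p))\<^sup>2"
      using norm_diff_sq_expand[of "q - p" "c - p"] by simp
    then have "(norm (q - p))\<^sup>2 \<le> (norm (q - c))\<^sup>2"
      using normal[OF that] zero_le_power2[of "norm (c - p)"] by linarith
    then show ?thesis unfolding dist_norm by (rule power2_le_imp_le) simp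
  qed
  then show ?thesis using closest_point_unique[OF assms(2,1,3)] by auto
qed

lemma closest_point_along_normal_ray:
  fixes C :: "'a::euclidean_space set"
  assumes "closed C" "convex C" "C \<noteq> {}" "0 \<le> l"
  shows "closest_point C ((1 - l) *\<^sub>R closest_point C q + l *\<^sub>R q) = closest_point C q"
proof (rule closest_point_eqI[OF assms(1,2) closest_point_in_set[OF assms(1,3)]])
  fix c assume "c \<in> C"
  then have "l * inner (q - closest_point C q) (c - closest_point C q) \<le> 0"
    using closest_point_dot[OF assms(2,1)] assms(4) by (simp add: mult_nonneg_nonpos)
  moreover have "(1 - l) *\<^sub>R closest_point C q + l *\<^sub>R q - closest_point C q
      = l *\<^sub>R (q - closest_point C q)"
    by (simp add: algebra_simps)
  ultimately show "inner ((1 - l) *\<^sub>R closest_point C q + l *\<^sub>R q - closest_point C q)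
      (c - closest_point C q) \<le> 0"
    by simp
qed

lemma closest_point_firmly_nonexpansive:
  fixes C :: "'a::euclidean_space set"
  assumes "closed C" "convex C" "C \<noteq> {}"
  shows "(norm (closest_point C p - closest_point C q))\<^sup>2
    \<le> inner (p - q) (closest_point C p - closest_point C q)"
proof -
  have "inner (p - closest_point C p) (closest_point C q - closest_point C p) \<le> 0"
    and "inner (q - closest_point C q) (closest_point C p - closest_point C q) \<le> 0"
    using assms by (simp_all add: closest_point_dot closest_point_in_set)
  moreover have "inner (p - closest_point C p) (closest_point C q - closest_point C p)
      + inner (q - closest_point C q) (closest_point C p - closest_point C q)
      = (norm (closest_point C p - closest_point C q))\<^sup>2 - inner (p - q) (closest_point C p - closest_point C q)"
    by (simp add: power2_norm_eq_inner inner_diff_left inner_diff_right)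
  ultimately show ?thesis by linarith
qed

lemma closest_point_residual_nonexpansive:
  fixes C :: "'a::euclidean_space set"
  assumes "closed C" "convex C" "C \<noteq> {}"
  shows "norm ((p - closest_point C p) - (q - closest_point C q)) \<le> norm (p - q)"
proof -
  have "(norm ((p - q) - (closest_point C p - closest_point C q)))\<^sup>2 \<le> (norm (p - q))\<^sup>2"
    using closest_point_firmly_nonexpansive[OF assms, of p q]
      norm_diff_sq_expand[of "p - q" "closest_point C p - closest_point C q"]
      zero_le_power2[of "norm (closest_point C p - closest_point C q)"]
    by linarith
  moreover have "(p - closest_point C p) - (q - closest_point C q)
      = (p - q) - (closest_point C p - closest_point C q)"
    by (simp add: algebra_simps)
  ultimately show ?thesis by (metis power2_le_imp_le norm_ge_zero)
qed

lemma norm_closest_point_le: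
  fixes C :: "'a::euclidean_space set"
  assumes "closed C" "convex C" "C \<noteq> {}"
  shows "norm (closest_point C u) \<le> norm (closest_point C 0) + norm u"
  using closest_point_lipschitz[OF assms(2,1,3), of u 0] norm_triangle_ineq2[of "closest_point C u" "closest_point C 0"]
  by (simp add: dist_norm)

section \<open>The half squared distance function\<close>

lemma infdist_eq_norm_closest_point:
  fixes C :: "'a::euclidean_space set"
  assumes "closed C" "C \<noteq> {}"
  shows "infdist u C = norm (u - closest_point C u)"
  by (simp add: infdist_eq_setdist setdist_closest_point[OF assms] dist_norm)

lemma half_sq_infdist_gradient_ineq:
  fixes C :: "'a::euclidean_space set"
  assumes "closed C" "convex C" "C \<noteq> {}"
  shows "(infdist q C)\<^sup>2 / 2 + inner (q - closest_point C q) (p - q) \<le> (infdist p C)\<^sup>2 / 2"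
proof -
  let ?r = "q - closest_point C q" and ?s = "p - closest_point C p"
  have "inner ?r (closest_point C p - closest_point C q) \<le> 0"
    using closest_point_dot[OF assms(2,1) closest_point_in_set[OF assms(1,3)]] .
  then have "inner ?r (p - q) \<le> inner ?r (?s - ?r)"
    by (simp add: inner_diff_right)
  also have "\<dots> = ((norm ?s)\<^sup>2 - (norm ?r)\<^sup>2 - (norm (?s - ?r))\<^sup>2) / 2"
    using dot_norm[of ?r "?s - ?r"] by simp
  also have "\<dots> \<le> ((norm ?s)\<^sup>2 - (norm ?r)\<^sup>2) / 2"
    by (simp add: divide_right_mono)
  finally show ?thesis
    unfolding infdist_eq_norm_closest_point[OF assms(1,3)] by (simp add: field_simps)
qed

lemma has_derivative_half_sq_infdist:
  fixes C :: "'a::euclidean_space set"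
  assumes "closed C" "convex C" "C \<noteq> {}"
  shows "((\<lambda>u. (infdist u C)\<^sup>2 / 2) has_derivative (\<lambda>h. inner (x - closest_point C x) h)) (at x)"
  unfolding has_derivative_at_alt
proof (intro conjI allI impI)
  show "bounded_linear (\<lambda>h. inner (x - closest_point C x) h)"
    by (rule bounded_linear_inner_right)
  fix e :: real assume "0 < e"
  show "\<exists>d>0. \<forall>y. norm (y - x) < d \<longrightarrow>
      norm ((infdist y C)\<^sup>2 / 2 - (infdist x C)\<^sup>2 / 2 - inner (x - closest_point C x) (y - x))
        \<le> e * norm (y - x)"
  proof (intro exI[of _ e] conjI allI impI)
    show "0 < e" by fact
    fix y assume "norm (y - x) < e"
    let ?r = "x - closest_point C x" and ?r' = "y - closest_point C y"
    let ?\<Delta> = "(infdist y C)\<^sup>2 / 2 - (infdist x C)\<^sup>2 / 2 - inner ?r (y - x)"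
    have "0 \<le> ?\<Delta>"
      using half_sq_infdist_gradient_ineq[OF assms, of x y] by simp
    moreover have "?\<Delta> \<le> inner (?r' - ?r) (y - x)"
      using half_sq_infdist_gradient_ineq[OF assms, of y x]
      by (simp add: inner_diff_left inner_diff_right)
    moreover have "inner (?r' - ?r) (y - x) \<le> norm (?r' - ?r) * norm (y - x)"
      by (rule norm_cauchy_schwarz)
    moreover have "norm (?r' - ?r) * norm (y - x) \<le> e * norm (y - x)"
      using closest_point_residual_nonexpansive[OF assms, of y x] \<open>norm (y - x) < e\<close>
      by (intro mult_right_mono) auto
    ultimately show "norm ?\<Delta> \<le> e * norm (y - x)" by simp
  qed
qed

lemma half_sq_infdist_plus_quadratic_ineq:
  fixes C :: "'a::euclidean_space set"
  assumes "closed C" "convex C" "C \<noteq> {}"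
  shows "(infdist q C)\<^sup>2 / 2 + \<mu> / 2 * (norm q)\<^sup>2
      + inner ((q - closest_point C q) + \<mu> *\<^sub>R q) (p - q) + \<mu> / 2 * (norm (p - q))\<^sup>2
    \<le> (infdist p C)\<^sup>2 / 2 + \<mu> / 2 * (norm p)\<^sup>2"
proof -
  have "(norm p)\<^sup>2 = (norm q)\<^sup>2 + 2 * inner q (p - q) + (norm (p - q))\<^sup>2"
    unfolding norm_diff_sq_expand by (simp add: inner_diff_right inner_commute power2_norm_eq_inner)
  then have "\<mu> / 2 * (norm p)\<^sup>2
      = \<mu> / 2 * (norm q)\<^sup>2 + inner (\<mu> *\<^sub>R q) (p - q) + \<mu> / 2 * (norm (p - q))\<^sup>2"
    by (simp add: distrib_left)
  then show ?thesis
    using half_sq_infdist_gradient_ineq[OF assms, of q p] unfolding inner_add_left by linarith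
qed

lemma half_sq_infdist_plus_quadratic_gradient_lipschitz:
  fixes C :: "'a::euclidean_space set"
  assumes "closed C" "convex C" "C \<noteq> {}"
  shows "norm (((p - closest_point C p) + \<mu> *\<^sub>R p) - ((q - closest_point C q) + \<mu> *\<^sub>R q))
    \<le> (1 + \<bar>\<mu>\<bar>) * norm (p - q)"
proof -
  have "norm (((p - closest_point C p) + \<mu> *\<^sub>R p) - ((q - closest_point C q) + \<mu> *\<^sub>R q))
      = norm (((p - closest_point C p) - (q - closest_point C q)) + \<mu> *\<^sub>R (p - q))"
    by (simp add: algebra_simps)
  also have "\<dots> \<le> norm ((p - closest_point C p) - (q - closest_point C q)) + norm (\<mu> *\<^sub>R (p - q))"
    by (rule norm_triangle_ineq)
  also have "\<dots> \<le> (1 + \<bar>\<mu>\<bar>) * norm (p - q)"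
    using closest_point_residual_nonexpansive[OF assms, of p q] by (simp add: distrib_right)
  finally show ?thesis .
qed

section \<open>Proximal normals\<close>

lemma indicator_fun_frechet_subdiffI:
  fixes D :: "'a::real_inner set"
  assumes "z \<in> D" "0 \<le> K" and proximal: "\<And>u. u \<in> D \<Longrightarrow> inner v (u - z) \<le> K * (norm (u - z))\<^sup>2"
  shows "v \<in> frechet_subdiff (indicator_fun D) z"
proof -
  let ?Q = "\<lambda>u. (indicator_fun D u - indicator_fun D z - ereal (v \<bullet> (u - z))) / ereal (norm (u - z))"
  have "eventually (\<lambda>u. y < ?Q u) (at z)" if "y < 0" for y
  proof -
    obtain c where "y < ereal c" "c < 0"
      using \<open>y < 0\<close> ereal_dense2 by (metis ereal_less(2) less_ereal.simps(1) zero_ereal_def)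
    have "y < ?Q u" if "u \<noteq> z" "dist u z < - c / (K + 1)" for u
    proof (cases "u \<in> D")
      case False
      then show ?thesis using \<open>z \<in> D\<close> \<open>u \<noteq> z\<close> \<open>y < ereal c\<close> by (auto simp: indicator_fun_def)
    next
      case True
      have n: "0 < norm (u - z)" using \<open>u \<noteq> z\<close> by simp
      have "K * norm (u - z) \<le> (K + 1) * norm (u - z)" using n by simp
      also have "\<dots> < - c"
        using that(2) \<open>0 \<le> K\<close> by (simp add: dist_norm field_simps)
      finally have "K * norm (u - z) * norm (u - z) < - c * norm (u - z)"
        using n by (rule mult_strict_right_mono)
      then have "inner v (u - z) < - c * norm (u - z)"
        using proximal[OF True] by (simp add: power2_eq_square mult.assoc)
      then have "c < - inner v (u - z) / norm (u - z)"
        using n by (simp add: field_simps)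
      then have "y < ereal (- inner v (u - z) / norm (u - z))"
        using \<open>y < ereal c\<close> less_ereal.simps(1) less_trans by blast
      then show ?thesis
        using True \<open>z \<in> D\<close> n by (simp add: indicator_fun_def)
    qed
    moreover have "0 < - c / (K + 1)" using \<open>c < 0\<close> \<open>0 \<le> K\<close> by (simp add: divide_neg_pos)
    ultimately show ?thesis unfolding eventually_at by blast
  qed
  then have "0 \<le> Liminf (at z) ?Q" unfolding le_Liminf_iff by simp
  then show ?thesis using \<open>z \<in> D\<close> by (simp add: frechet_subdiff_def indicator_fun_def)
qed

lemma proj_set_inner_le:
  fixes D :: "'a::real_inner set"
  assumes "z \<in> proj_set D w" "u \<in> D"
  shows "inner (w - z) (u - z) \<le> (norm (u - z))\<^sup>2 / 2"
proof -
  have "norm (w - z) \<le> norm (w - u)"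
    using assms unfolding proj_set_def by (simp add: dist_norm)
  then have "(norm (w - z))\<^sup>2 \<le> (norm ((w - z) - (u - z)))\<^sup>2"
    by (simp add: power_mono)
  then show ?thesis
    unfolding norm_diff_sq_expand by simp
qed

lemma proj_set_normal_in_frechet_subdiff:
  fixes D :: "'a::real_inner set"
  assumes "z \<in> proj_set D w" "0 \<le> l"
  shows "l *\<^sub>R (w - z) \<in> frechet_subdiff (indicator_fun D) z"
proof (rule indicator_fun_frechet_subdiffI)
  show "z \<in> D" using assms(1) unfolding proj_set_def by blast
  show "0 \<le> l / 2" using assms(2) by simp
  fix u assume "u \<in> D"
  then show "inner (l *\<^sub>R (w - z)) (u - z) \<le> l / 2 * (norm (u - z))\<^sup>2"
    using mult_left_mono[OF proj_set_inner_le[OF assms(1)] assms(2)] by simp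
qed

lemma limiting_subdiff_indicator_funI:
  assumes "\<And>t. xs t \<in> D" "xs \<longlonglongrightarrow> x" "x \<in> D"
    and "\<And>t. vs t \<in> frechet_subdiff (indicator_fun D) (xs t)" "vs \<longlonglongrightarrow> v"
  shows "v \<in> limiting_subdiff (indicator_fun D) x"
proof -
  have "(\<lambda>t. indicator_fun D (xs t)) \<longlonglongrightarrow> indicator_fun D x"
    using assms(1,3) by (simp add: indicator_fun_def)
  then show ?thesis
    unfolding limiting_subdiff_def using assms(2,4,5) by blast
qed

lemma proj_set_scaled_minimizes:
  fixes D :: "'a::real_inner set"
  assumes "0 < \<beta>" "z \<in> proj_set D ((1 / \<beta>) *\<^sub>R w)" "e \<in> D"
  shows "(norm (z - w))\<^sup>2 / 2 - (1 - \<beta>) / 2 * (norm z)\<^sup>2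
    \<le> (norm (e - w))\<^sup>2 / 2 - (1 - \<beta>) / 2 * (norm e)\<^sup>2"
proof -
  define q where "q = (1 / \<beta>) *\<^sub>R w"
  have "w = \<beta> *\<^sub>R q" using assms(1) by (simp add: q_def)
  then have completed_square: "(norm (u - w))\<^sup>2 / 2 - (1 - \<beta>) / 2 * (norm u)\<^sup>2
      = \<beta> / 2 * (norm (u - q))\<^sup>2 + (\<beta>\<^sup>2 - \<beta>) / 2 * (norm q)\<^sup>2" for u
    unfolding norm_diff_sq_expand by (simp add: power_mult_distrib field_simps)
  have "norm (z - q) \<le> norm (e - q)"
    using assms(2,3) unfolding proj_set_def q_def by (simp add: dist_norm norm_minus_commute)
  then have "\<beta> / 2 * (norm (z - q))\<^sup>2 \<le> \<beta> / 2 * (norm (e - q))\<^sup>2"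
    using assms(1) by (intro mult_left_mono power_mono) auto
  then show ?thesis unfolding completed_square by simp
qed

text \<open>
  Read \<open>p, a\<close> as \<open>y\<^sup>t\<^sup>+\<^sup>1\<close> and \<open>x\<^sup>t - y\<^sup>t\<^sup>+\<^sup>1\<close> (so \<open>p - a\<close> is the reflected point \<open>2y\<^sup>t\<^sup>+\<^sup>1 - x\<^sup>t\<close>),
  primed quantities as those of the next step, and \<open>fp, gz\<close> as the values of the two summands at
  \<open>p\<close> and \<open>z\<close>; the conclusion is the decrease of the Douglas--Rachford merit function.
\<close>
lemma douglas_rachford_merit_decrease:
  fixes p p' a a' z z' :: "'a::real_inner"
  assumes z: "2 *\<^sub>R z = p' + a' + p - a"
    and prox_f: "fp' + inner a' (p - p') + \<sigma> / 2 * (norm (p' - p))\<^sup>2 \<le> fp"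
    and lip: "norm (a' - a) \<le> L * norm (p' - p)"
    and prox_g: "gz' + (norm (z' - (p' - a')))\<^sup>2 / 2 \<le> gz + (norm (z - (p' - a')))\<^sup>2 / 2"
  shows "fp' + gz' + (norm (z' - (p' - a')))\<^sup>2 / 2 - (norm a')\<^sup>2 / 2 + (\<sigma> - L\<^sup>2) / 2 * (norm (p' - p))\<^sup>2
    \<le> fp + gz + (norm (z - (p - a)))\<^sup>2 / 2 - (norm a)\<^sup>2 / 2"
proof -
  have z_eq: "z = (1/2) *\<^sub>R (p' + a' + p - a)"
    using arg_cong[OF z, of "scaleR (1/2)"] by simp
  have merit_shift: "(norm (z - (p' - a')))\<^sup>2 / 2 - (norm a')\<^sup>2 / 2
      = (norm (z - (p - a)))\<^sup>2 / 2 - (norm a)\<^sup>2 / 2 + inner a' (p - p') + (norm (a' - a))\<^sup>2 / 2"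
    unfolding z_eq by (simp add: power2_norm_eq_inner inner_add_left inner_add_right inner_diff_left
        inner_diff_right inner_commute field_simps)
  have "(norm (a' - a))\<^sup>2 \<le> L\<^sup>2 * (norm (p' - p))\<^sup>2"
    using power_mono[OF lip norm_ge_zero, of 2] by (simp add: power_mult_distrib)
  moreover have "(\<sigma> - L\<^sup>2) / 2 * (norm (p' - p))\<^sup>2
      = \<sigma> / 2 * (norm (p' - p))\<^sup>2 - L\<^sup>2 * (norm (p' - p))\<^sup>2 / 2"
    by (simp add: field_simps)
  ultimately show ?thesis using merit_shift prox_f prox_g by linarith
qed

section \<open>The iteration\<close>

lemma le_max_of_affine_contraction:
  fixes u :: "nat \<Rightarrow> real"
  assumes "0 \<le> \<alpha>" "\<alpha> < 1" and step: "\<And>t. u (Suc t) \<le> \<alpha> * u t + \<beta>"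
  shows "u t \<le> max (u 0) (\<beta> / (1 - \<alpha>))"
proof (induction t)
  case (Suc t)
  have "\<beta> = \<beta> / (1 - \<alpha>) * (1 - \<alpha>)"
    using \<open>\<alpha> < 1\<close> by simp
  also have "\<dots> \<le> max (u 0) (\<beta> / (1 - \<alpha>)) * (1 - \<alpha>)"
    using \<open>\<alpha> < 1\<close> by (intro mult_right_mono) auto
  finally have "\<beta> \<le> max (u 0) (\<beta> / (1 - \<alpha>)) * (1 - \<alpha>)" .
  moreover have "\<alpha> * u t \<le> \<alpha> * max (u 0) (\<beta> / (1 - \<alpha>))"
    using Suc \<open>0 \<le> \<alpha>\<close> by (rule mult_left_mono)
  ultimately show ?case using step[of t] by argo
qed simp

lemma bounded_range_SucD:
  assumes "bounded (range (\<lambda>t. f (Suc t)))"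
  shows "bounded (range f)"
proof -
  have "range f \<subseteq> insert (f 0) (range (\<lambda>t. f (Suc t)))"
    by (auto simp: image_iff) (metis not0_implies_Suc)
  then show ?thesis using assms by (meson bounded_insert bounded_subset)
qed

locale douglas_rachford_iteration =
  fixes C D :: "'a::euclidean_space set" and \<gamma> :: real and x y z :: "nat \<Rightarrow> 'a"
  assumes C: "closed C" "convex C" "C \<noteq> {}"
    and D: "compact D"
    and \<gamma>: "0 < \<gamma>" "\<gamma> < 1/12"
    and y_step: "\<And>t. y (Suc t) =
        (1 / (6*\<gamma> + 1)) *\<^sub>R (\<gamma> *\<^sub>R closest_point C ((1 / (1 + 5*\<gamma>)) *\<^sub>R x t) + x t)"
    and z_step: "\<And>t. z (Suc t) \<in> proj_set D ((1 / (1 - 5*\<gamma>)) *\<^sub>R (2 *\<^sub>R y (Suc t) - x t))"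
    and x_step: "\<And>t. x (Suc t) = x t + 2 *\<^sub>R (z (Suc t) - y (Suc t))"
begin

definition f :: "'a \<Rightarrow> real" where
  "f u = (infdist u C)\<^sup>2 / 2 + 5 / 2 * (norm u)\<^sup>2"

definition grad_f :: "'a \<Rightarrow> 'a" where
  "grad_f u = (u - closest_point C u) + 5 *\<^sub>R u"

text \<open>The merit function at \<open>(y\<^sup>t\<^sup>+\<^sup>1, z\<^sup>t\<^sup>+\<^sup>1, x\<^sup>t)\<close>; its second term is \<open>\<gamma> g (z\<^sup>t\<^sup>+\<^sup>1)\<close> since \<open>z\<^sup>t\<^sup>+\<^sup>1 \<in> D\<close>.\<close>
definition merit :: "nat \<Rightarrow> real" where
  "merit t = \<gamma> * f (y (Suc t)) - 5 * \<gamma> / 2 * (norm (z (Suc t)))\<^sup>2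
     + (norm (z (Suc t) - (2 *\<^sub>R y (Suc t) - x t)))\<^sup>2 / 2 - (norm (x t - y (Suc t)))\<^sup>2 / 2"

lemma closest_point_y_Suc: "closest_point C (y (Suc t)) = closest_point C ((1 / (1 + 5*\<gamma>)) *\<^sub>R x t)"
proof -
  let ?q = "(1 / (1 + 5*\<gamma>)) *\<^sub>R x t" and ?l = "(1 + 5*\<gamma>) / (6*\<gamma> + 1)"
  have "(1 / (6*\<gamma> + 1)) *\<^sub>R x t = ?l *\<^sub>R ?q" and "\<gamma> / (6*\<gamma> + 1) = 1 - ?l"
    using \<gamma> by (simp_all add: field_simps)
  then have y_on_ray: "y (Suc t) = (1 - ?l) *\<^sub>R closest_point C ?q + ?l *\<^sub>R ?q"
    unfolding y_step by (simp add: scaleR_add_right)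
  show ?thesis
    unfolding y_on_ray by (rule closest_point_along_normal_ray[OF C]) (use \<gamma> in simp)
qed

lemma x_eq_scaled_y: "x t = (6*\<gamma> + 1) *\<^sub>R y (Suc t) - \<gamma> *\<^sub>R closest_point C (y (Suc t))"
proof -
  have "(6*\<gamma> + 1) *\<^sub>R y (Suc t) = \<gamma> *\<^sub>R closest_point C ((1 / (1 + 5*\<gamma>)) *\<^sub>R x t) + x t"
    using y_step[of t] \<gamma> by simp
  then show ?thesis unfolding closest_point_y_Suc by simp
qed

lemma x_eq_y_plus_grad_f: "x t = y (Suc t) + \<gamma> *\<^sub>R grad_f (y (Suc t))"
proof -
  have "(6*\<gamma> + 1) *\<^sub>R v = v + \<gamma> *\<^sub>R v + (5 * \<gamma>) *\<^sub>R v" for v :: 'a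
    using scaleR_add_left[of \<gamma> "5 * \<gamma>" v] by (simp add: algebra_simps)
  then show ?thesis unfolding grad_f_def x_eq_scaled_y[of t] by (simp add: algebra_simps)
qed

lemma z_in_D: "z (Suc t) \<in> D"
  using z_step[of t] unfolding proj_set_def by blast

lemma norm_y_Suc_le: "(1 + 5*\<gamma>) * norm (y (Suc t)) \<le> norm (x t) + \<gamma> * norm (closest_point C 0)"
proof -
  have "(6*\<gamma> + 1) * norm (y (Suc t)) = norm (x t + \<gamma> *\<^sub>R closest_point C (y (Suc t)))"
    using \<gamma> unfolding x_eq_scaled_y[of t] by simp
  also have "\<dots> \<le> norm (x t) + \<gamma> * (norm (closest_point C 0) + norm (y (Suc t)))"
  proof -
    have "norm (\<gamma> *\<^sub>R closest_point C (y (Suc t))) \<le> \<gamma> * (norm (closest_point C 0) + norm (y (Suc t)))"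
      using norm_closest_point_le[OF C, of "y (Suc t)"] \<gamma> by (simp add: mult_left_mono)
    then show ?thesis using norm_triangle_ineq[of "x t" "\<gamma> *\<^sub>R closest_point C (y (Suc t))"] by linarith
  qed
  finally show ?thesis by (simp add: algebra_simps)
qed

lemma norm_x_Suc_le:
  assumes "\<And>d. d \<in> D \<Longrightarrow> norm d \<le> R"
  shows "norm (x (Suc t)) \<le> 2 * R + \<gamma> * norm (closest_point C 0) + (1 - 5*\<gamma>) * norm (y (Suc t))"
proof -
  let ?y = "y (Suc t)"
  define P where "P = closest_point C ?y"
  have "x (Suc t) = 2 *\<^sub>R z (Suc t) - ((1 - 6*\<gamma>) *\<^sub>R ?y + \<gamma> *\<^sub>R P)"
    unfolding x_step x_eq_scaled_y[of t, folded P_def] by (simp add: algebra_simps scaleR_2)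
  also have "norm \<dots> \<le> norm (2 *\<^sub>R z (Suc t)) + (norm ((1 - 6*\<gamma>) *\<^sub>R ?y) + norm (\<gamma> *\<^sub>R P))"
    by (rule order_trans[OF norm_triangle_ineq4 add_left_mono[OF norm_triangle_ineq]])
  also have "\<dots> \<le> 2 * R + ((1 - 6*\<gamma>) * norm ?y + \<gamma> * (norm (closest_point C 0) + norm ?y))"
  proof -
    have "norm (2 *\<^sub>R z (Suc t)) \<le> 2 * R" using assms[OF z_in_D] by simp
    moreover have "norm ((1 - 6*\<gamma>) *\<^sub>R ?y) = (1 - 6*\<gamma>) * norm ?y" using \<gamma> by simp
    moreover have "norm (\<gamma> *\<^sub>R P) \<le> \<gamma> * (norm (closest_point C 0) + norm ?y)"
      using norm_closest_point_le[OF C, of ?y, folded P_def] \<gamma> by (simp add: mult_left_mono)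
    ultimately show ?thesis by linarith
  qed
  finally show ?thesis by (simp add: algebra_simps)
qed

lemma bounded_range_x: "bounded (range x)"
proof -
  obtain R where R: "\<And>d. d \<in> D \<Longrightarrow> norm d \<le> R"
    using compact_imp_bounded[OF D] unfolding bounded_iff by blast
  define \<alpha> where "\<alpha> = (1 - 5*\<gamma>) / (1 + 5*\<gamma>)"
  define \<beta> where "\<beta> = 2 * R + \<gamma> * norm (closest_point C 0) + \<alpha> * (\<gamma> * norm (closest_point C 0))"
  have "norm (x (Suc t)) \<le> \<alpha> * norm (x t) + \<beta>" for t
  proof -
    have "\<alpha> * (1 + 5*\<gamma>) = 1 - 5*\<gamma>" "0 \<le> \<alpha>" using \<gamma> by (simp_all add: \<alpha>_def)
    then have "(1 - 5*\<gamma>) * norm (y (Suc t)) \<le> \<alpha> * (norm (x t) + \<gamma> * norm (closest_point C 0))"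
      using mult_left_mono[OF norm_y_Suc_le[of t], of \<alpha>] by (metis mult.assoc)
    then show ?thesis
      using norm_x_Suc_le[OF R, of t] unfolding \<beta>_def by (simp add: algebra_simps)
  qed
  moreover have "0 \<le> \<alpha>" "\<alpha> < 1" using \<gamma> by (simp_all add: \<alpha>_def)
  ultimately have "norm (x t) \<le> max (norm (x 0)) (\<beta> / (1 - \<alpha>))" for t
    using le_max_of_affine_contraction[of \<alpha> "\<lambda>t. norm (x t)"] by blast
  then show ?thesis by (auto intro!: boundedI[where B="max (norm (x 0)) (\<beta> / (1 - \<alpha>))"])
qed

lemma bounded_range_y: "bounded (range y)"
proof -
  obtain M where "\<And>t. norm (x t) \<le> M"
    using bounded_range_x unfolding bounded_iff by blast
  then have "(1 + 5*\<gamma>) * norm (y (Suc t)) \<le> M + \<gamma> * norm (closest_point C 0)" for t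
    using norm_y_Suc_le[of t] by (meson add_right_mono order_trans)
  then have "norm (y (Suc t)) \<le> (M + \<gamma> * norm (closest_point C 0)) / (1 + 5*\<gamma>)" for t
    using \<gamma> by (simp add: pos_le_divide_eq mult.commute)
  then have "bounded (range (\<lambda>t. y (Suc t)))"
    by (intro boundedI[where B="(M + \<gamma> * norm (closest_point C 0)) / (1 + 5*\<gamma>)"]) auto
  then show ?thesis by (rule bounded_range_SucD)
qed

lemma bounded_range_z: "bounded (range z)"
proof (rule bounded_range_SucD)
  show "bounded (range (\<lambda>t. z (Suc t)))"
    using z_in_D by (intro bounded_subset[OF compact_imp_bounded[OF D]]) auto
qed

lemma bounded_iterates: "bounded (range (\<lambda>t. (y t, z t, x t)))"
proof -
  have "range (\<lambda>t. (y t, z t, x t)) \<subseteq> range y \<times> range z \<times> range x" by auto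
  then show ?thesis
    using bounded_Times[OF bounded_range_y bounded_Times[OF bounded_range_z bounded_range_x]]
    by (rule bounded_subset[rotated])
qed

lemma merit_decrease: "merit (Suc t) + \<gamma> * (norm (y (Suc (Suc t)) - y (Suc t)))\<^sup>2 \<le> merit t"
proof -
  let ?p = "y (Suc t)" and ?p' = "y (Suc (Suc t))"
    and ?a = "x t - y (Suc t)" and ?a' = "x (Suc t) - y (Suc (Suc t))"
  have a_grad: "x s - y (Suc s) = \<gamma> *\<^sub>R grad_f (y (Suc s))" for s
    using x_eq_y_plus_grad_f[of s] by simp
  have z: "2 *\<^sub>R z (Suc t) = ?p' + ?a' + ?p - ?a"
    using x_step[of t] by (simp add: algebra_simps scaleR_2)
  have prox_f: "\<gamma> * f ?p' + inner ?a' (?p - ?p') + (5*\<gamma>) / 2 * (norm (?p' - ?p))\<^sup>2 \<le> \<gamma> * f ?p"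
    using mult_left_mono[OF half_sq_infdist_plus_quadratic_ineq[OF C, of ?p' 5 ?p], of \<gamma>] \<gamma>
    unfolding f_def a_grad grad_f_def
    by (simp add: norm_minus_commute algebra_simps)
  have lip: "norm (?a' - ?a) \<le> 6 * \<gamma> * norm (?p' - ?p)"
  proof -
    have "?a' - ?a = \<gamma> *\<^sub>R (grad_f ?p' - grad_f ?p)"
      unfolding a_grad by (simp add: algebra_simps)
    then show ?thesis
      using half_sq_infdist_plus_quadratic_gradient_lipschitz[OF C, of ?p' 5 ?p] \<gamma>
      unfolding grad_f_def by (simp add: mult_left_mono)
  qed
  have w: "?p' - ?a' = 2 *\<^sub>R ?p' - x (Suc t)" and w': "?p - ?a = 2 *\<^sub>R ?p - x t"
    by (simp_all add: algebra_simps scaleR_2)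
  have prox_g: "- (5*\<gamma>/2) * (norm (z (Suc (Suc t))))\<^sup>2 + (norm (z (Suc (Suc t)) - (?p' - ?a')))\<^sup>2 / 2
      \<le> - (5*\<gamma>/2) * (norm (z (Suc t)))\<^sup>2 + (norm (z (Suc t) - (?p' - ?a')))\<^sup>2 / 2"
    using proj_set_scaled_minimizes[of "1 - 5*\<gamma>", OF _ z_step[of "Suc t"] z_in_D[of t]] \<gamma>
    unfolding w by simp
  have "36 * \<gamma>\<^sup>2 \<le> 3 * \<gamma>" using \<gamma> by (simp add: power2_eq_square)
  then have "\<gamma> * (norm (?p' - ?p))\<^sup>2 \<le> (5*\<gamma> - (6*\<gamma>)\<^sup>2) / 2 * (norm (?p' - ?p))\<^sup>2"
    by (intro mult_right_mono) (auto simp: power_mult_distrib)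
  then show ?thesis
    using douglas_rachford_merit_decrease[OF z prox_f lip prox_g]
    unfolding merit_def w w' by linarith
qed

lemma merit_bounded_below: "\<exists>m. \<forall>t. m \<le> merit t"
proof -
  obtain M where M: "\<And>t. norm (y t, z t, x t) \<le> M"
    using bounded_iterates unfolding bounded_iff by blast
  have Mzx: "norm (z t, x t) \<le> M" for t
    using M[of t] norm_snd_le[where x="y t" and y="(z t, x t)"] by linarith
  have My: "norm (y t) \<le> M" for t
    using M[of t] norm_fst_le[where x="y t" and y="(z t, x t)"] by linarith
  have Mz: "norm (z t) \<le> M" for t
    using Mzx[of t] norm_fst_le[where x="z t" and y="x t"] by linarith
  have Mx: "norm (x t) \<le> M" for t
    using Mzx[of t] norm_snd_le[where x="z t" and y="x t"] by linarith
  have "- (5*\<gamma>/2) * M\<^sup>2 - (2 * M)\<^sup>2 / 2 \<le> merit t" for t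
  proof -
    have "0 \<le> \<gamma> * f (y (Suc t))" unfolding f_def using \<gamma> by simp
    moreover have "(norm (z (Suc t)))\<^sup>2 \<le> M\<^sup>2"
      using Mz[of "Suc t"] by (intro power_mono) auto
    then have "5*\<gamma>/2 * (norm (z (Suc t)))\<^sup>2 \<le> 5*\<gamma>/2 * M\<^sup>2"
      using \<gamma> by (intro mult_left_mono) auto
    moreover have "norm (x t - y (Suc t)) \<le> 2 * M"
      using norm_triangle_ineq4[of "x t" "y (Suc t)"] Mx[of t] My[of "Suc t"] by linarith
    then have "(norm (x t - y (Suc t)))\<^sup>2 \<le> (2 * M)\<^sup>2"
      by (intro power_mono) auto
    moreover have "0 \<le> (norm (z (Suc t) - (2 *\<^sub>R y (Suc t) - x t)))\<^sup>2" by simp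
    ultimately show ?thesis unfolding merit_def by linarith
  qed
  then show ?thesis by blast
qed

lemma y_diff_tendsto_zero: "(\<lambda>t. y (Suc (Suc t)) - y (Suc t)) \<longlonglongrightarrow> 0"
proof -
  obtain m where m: "\<And>t. m \<le> merit t" using merit_bounded_below by blast
  let ?N = "\<lambda>t. (norm (y (Suc (Suc t)) - y (Suc t)))\<^sup>2"
  have "(\<Sum>i<n. ?N i) \<le> (merit 0 - m) / \<gamma>" for n
  proof -
    have "\<gamma> * (\<Sum>i<n. ?N i) = (\<Sum>i<n. \<gamma> * ?N i)" by (rule sum_distrib_left)
    also have "\<dots> \<le> (\<Sum>i<n. merit i - merit (Suc i))"
      using merit_decrease by (intro sum_mono) (simp add: algebra_simps)
    also have "\<dots> = merit 0 - merit n" by (rule sum_lessThan_telescope')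
    also have "\<dots> \<le> merit 0 - m" using m[of n] by simp
    finally show ?thesis using \<gamma> by (simp add: pos_le_divide_eq mult.commute)
  qed
  then have "summable ?N" by (intro summableI_nonneg_bounded) auto
  then have "?N \<longlonglongrightarrow> 0" by (rule summable_LIMSEQ_zero)
  then have "(\<lambda>t. sqrt (?N t)) \<longlonglongrightarrow> 0" using tendsto_real_sqrt by fastforce
  then show ?thesis by (simp add: tendsto_norm_zero_iff)
qed

lemma z_minus_y_tendsto_zero: "(\<lambda>t. z t - y t) \<longlonglongrightarrow> 0"
proof (rule LIMSEQ_imp_Suc, rule Lim_null_comparison)
  show "\<forall>\<^sub>F t in sequentially. norm (z (Suc t) - y (Suc t))
      \<le> (1 + 6*\<gamma>) / 2 * norm (y (Suc (Suc t)) - y (Suc t))"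
  proof (rule always_eventually, rule allI)
    fix t
    let ?p = "y (Suc t)" and ?p' = "y (Suc (Suc t))"
    have "2 *\<^sub>R (z (Suc t) - ?p) = (?p' - ?p) + \<gamma> *\<^sub>R (grad_f ?p' - grad_f ?p)"
      using x_step[of t] x_eq_y_plus_grad_f[of t] x_eq_y_plus_grad_f[of "Suc t"]
      by (simp add: algebra_simps)
    then have "2 * norm (z (Suc t) - ?p) = norm ((?p' - ?p) + \<gamma> *\<^sub>R (grad_f ?p' - grad_f ?p))"
      by (metis norm_scaleR abs_numeral)
    also have "\<dots> \<le> norm (?p' - ?p) + \<gamma> * norm (grad_f ?p' - grad_f ?p)"
      using norm_triangle_ineq[of "?p' - ?p" "\<gamma> *\<^sub>R (grad_f ?p' - grad_f ?p)"] \<gamma> by simp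
    finally have "2 * norm (z (Suc t) - ?p) \<le> norm (?p' - ?p) + \<gamma> * norm (grad_f ?p' - grad_f ?p)" .
    moreover have "norm (grad_f ?p' - grad_f ?p) \<le> 6 * norm (?p' - ?p)"
      using half_sq_infdist_plus_quadratic_gradient_lipschitz[OF C, of ?p' 5 ?p]
      unfolding grad_f_def by simp
    then have "\<gamma> * norm (grad_f ?p' - grad_f ?p) \<le> \<gamma> * (6 * norm (?p' - ?p))"
      using \<gamma> by (intro mult_left_mono) auto
    ultimately show "norm (z (Suc t) - ?p) \<le> (1 + 6*\<gamma>) / 2 * norm (?p' - ?p)"
      by (simp add: field_simps)
  qed
  show "(\<lambda>t. (1 + 6*\<gamma>) / 2 * norm (y (Suc (Suc t)) - y (Suc t))) \<longlonglongrightarrow> 0"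
    using y_diff_tendsto_zero by (intro tendsto_mult_right_zero) (simp add: tendsto_norm_zero_iff)
qed

lemma fixed_point_normal:
  "((1 - 5*\<gamma>) / \<gamma>) *\<^sub>R ((1 / (1 - 5*\<gamma>)) *\<^sub>R (2 *\<^sub>R u - (u + \<gamma> *\<^sub>R grad_f u)) - u)
    = closest_point C u - u"
proof -
  have coeff: "(1 - 5*\<gamma>) / \<gamma> * (1 / (1 - 5*\<gamma>)) = 1 / \<gamma>"
    using \<gamma> by simp
  have "((1 - 5*\<gamma>) / \<gamma>) *\<^sub>R ((1 / (1 - 5*\<gamma>)) *\<^sub>R w - u) = (1 / \<gamma>) *\<^sub>R w - ((1 - 5*\<gamma>) / \<gamma>) *\<^sub>R u" for w
    by (simp only: scaleR_right_diff_distrib scaleR_scaleR coeff)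
  then have "((1 - 5*\<gamma>) / \<gamma>) *\<^sub>R ((1 / (1 - 5*\<gamma>)) *\<^sub>R (2 *\<^sub>R u - (u + \<gamma> *\<^sub>R grad_f u)) - u)
      = (1 / \<gamma>) *\<^sub>R (2 *\<^sub>R u - (u + \<gamma> *\<^sub>R grad_f u)) - ((1 - 5*\<gamma>) / \<gamma>) *\<^sub>R u" .
  also have "(1 / \<gamma>) *\<^sub>R (2 *\<^sub>R u - (u + \<gamma> *\<^sub>R grad_f u)) = (1 / \<gamma>) *\<^sub>R u - grad_f u"
    using \<gamma> by (simp add: scaleR_2 algebra_simps)
  also have "(1 / \<gamma>) *\<^sub>R u - grad_f u - ((1 - 5*\<gamma>) / \<gamma>) *\<^sub>R u
      = (1 / \<gamma> - (1 - 5*\<gamma>) / \<gamma>) *\<^sub>R u - grad_f u"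
    by (simp add: scaleR_left_diff_distrib)
  also have "1 / \<gamma> - (1 - 5*\<gamma>) / \<gamma> = 5"
    using \<gamma> by (simp add: field_simps)
  finally show ?thesis unfolding grad_f_def by (simp add: algebra_simps)
qed

lemma cluster_point_y_eq_z:
  assumes "strict_mono r" "(\<lambda>t. (y (r t), z (r t), x (r t))) \<longlonglongrightarrow> (yb, zb, xb)"
  shows "yb = zb"
proof -
  have "(\<lambda>t. z (r t) - y (r t)) \<longlonglongrightarrow> zb - yb"
    using tendsto_fst[OF assms(2)] tendsto_fst[OF tendsto_snd[OF assms(2)]]
    by (intro tendsto_diff) simp_all
  moreover have "(\<lambda>t. z (r t) - y (r t)) \<longlonglongrightarrow> 0"
    using LIMSEQ_subseq_LIMSEQ[OF z_minus_y_tendsto_zero assms(1)] by (simp add: o_def)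
  ultimately show ?thesis using LIMSEQ_unique by fastforce
qed

lemma cluster_point_normal:
  assumes "strict_mono r" "(\<lambda>t. (y (r t), z (r t), x (r t))) \<longlonglongrightarrow> (yb, zb, xb)"
  shows "closest_point C zb - zb \<in> limiting_subdiff (indicator_fun D) zb"
proof -
  have yb: "yb = zb" by (rule cluster_point_y_eq_z[OF assms])
  \<comment> \<open>Shift the subsequence back by one, so that \<open>y\<close> and \<open>z\<close> are produced from the \<open>x\<close> along it.\<close>
  define s where "s t = r (Suc t) - 1" for t
  have Suc_s: "Suc (s t) = r (Suc t)" for t
    unfolding s_def using seq_suble[OF assms(1), of "Suc t"] by simp
  have Ly: "(\<lambda>t. y (Suc (s t))) \<longlonglongrightarrow> zb"
    using LIMSEQ_Suc[OF tendsto_fst[OF assms(2)]] unfolding Suc_s yb by simp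
  have Lz: "(\<lambda>t. z (Suc (s t))) \<longlonglongrightarrow> zb"
    using LIMSEQ_Suc[OF tendsto_fst[OF tendsto_snd[OF assms(2)]]] unfolding Suc_s by simp
  have "(\<lambda>t. x (Suc (s t))) \<longlonglongrightarrow> xb"
    using LIMSEQ_Suc[OF tendsto_snd[OF tendsto_snd[OF assms(2)]]] unfolding Suc_s by simp
  then have "(\<lambda>t. x (Suc (s t)) - 2 *\<^sub>R (z (Suc (s t)) - y (Suc (s t)))) \<longlonglongrightarrow> xb - 2 *\<^sub>R (zb - zb)"
    by (intro tendsto_intros Lz Ly)
  then have Lx: "(\<lambda>t. x (s t)) \<longlonglongrightarrow> xb" by (simp add: x_step)
  have cont: "isCont (closest_point C) zb"
    using continuous_at_closest_point[OF C(2,1,3)] by (simp add: continuous_at)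
  have "(\<lambda>t. y (Suc (s t)) + \<gamma> *\<^sub>R grad_f (y (Suc (s t)))) \<longlonglongrightarrow> zb + \<gamma> *\<^sub>R grad_f zb"
    unfolding grad_f_def by (intro tendsto_intros isCont_tendsto_compose[OF cont] Ly)
  then have xb: "xb = zb + \<gamma> *\<^sub>R grad_f zb"
    using LIMSEQ_unique[OF Lx] unfolding x_eq_y_plus_grad_f[symmetric] by blast
  have "zb \<in> D"
    using closed_sequentially[OF compact_imp_closed[OF D] _ Lz] z_in_D by blast
  moreover have "((1 - 5*\<gamma>) / \<gamma>) *\<^sub>R ((1 / (1 - 5*\<gamma>)) *\<^sub>R (2 *\<^sub>R y (Suc (s t)) - x (s t)) - z (Suc (s t)))
      \<in> frechet_subdiff (indicator_fun D) (z (Suc (s t)))" for t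
    using proj_set_normal_in_frechet_subdiff[OF z_step[of "s t"]] \<gamma> by simp
  moreover have "(\<lambda>t. ((1 - 5*\<gamma>) / \<gamma>) *\<^sub>R ((1 / (1 - 5*\<gamma>)) *\<^sub>R (2 *\<^sub>R y (Suc (s t)) - x (s t)) - z (Suc (s t))))
      \<longlonglongrightarrow> ((1 - 5*\<gamma>) / \<gamma>) *\<^sub>R ((1 / (1 - 5*\<gamma>)) *\<^sub>R (2 *\<^sub>R zb - xb) - zb)"
    by (intro tendsto_intros Ly Lx Lz)
  ultimately show ?thesis
    unfolding xb fixed_point_normal by (rule limiting_subdiff_indicator_funI[OF z_in_D Lz])
qed

end

theorem mainTheorem11:
  fixes C D :: "(real ^ 'n) set"
    and x y z :: "nat \<Rightarrow> real ^ 'n"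
    and \<gamma> :: real
  assumes C: "closed C" "convex C" "C \<noteq> {}"
    and D: "compact D" "D \<noteq> {}"
    and \<gamma>: "0 < \<gamma>" "\<gamma> < 1/12"
    and y_step: "\<And>t. y (Suc t) =
        (1 / (6*\<gamma> + 1)) *\<^sub>R (\<gamma> *\<^sub>R closest_point C ((1 / (1 + 5*\<gamma>)) *\<^sub>R x t) + x t)"
    and z_step: "\<And>t. z (Suc t) \<in> proj_set D ((1 / (1 - 5*\<gamma>)) *\<^sub>R (2 *\<^sub>R y (Suc t) - x t))"
    and x_step: "\<And>t. x (Suc t) = x t + 2 *\<^sub>R (z (Suc t) - y (Suc t))"
  shows "bounded (range (\<lambda>t. (y t, z t, x t))) \<and>
    (\<forall>yb zb xb. (\<exists>r. strict_mono r \<and> (\<lambda>t. (y (r t), z (r t), x (r t))) \<longlonglongrightarrow> (yb, zb, xb)) \<longrightarrow>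
       yb = zb \<and>
       (\<exists>g v. ((\<lambda>u. (infdist u C)\<^sup>2 / 2) has_derivative (\<lambda>h. g \<bullet> h)) (at zb) \<and>
              v \<in> limiting_subdiff (indicator_fun D) zb \<and> g + v = 0))"
proof -
  interpret douglas_rachford_iteration C D \<gamma> x y z
    using C D(1) \<gamma> y_step z_step x_step by unfold_locales
  have "yb = zb \<and>
      (\<exists>g v. ((\<lambda>u. (infdist u C)\<^sup>2 / 2) has_derivative (\<lambda>h. g \<bullet> h)) (at zb) \<and>
             v \<in> limiting_subdiff (indicator_fun D) zb \<and> g + v = 0)"
    if "strict_mono r" "(\<lambda>t. (y (r t), z (r t), x (r t))) \<longlonglongrightarrow> (yb, zb, xb)" for r yb zb xb
  proof (intro conjI exI)
    show "yb = zb" by (rule cluster_point_y_eq_z[OF that])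
    show "((\<lambda>u. (infdist u C)\<^sup>2 / 2) has_derivative (\<lambda>h. (zb - closest_point C zb) \<bullet> h)) (at zb)"
      by (rule has_derivative_half_sq_infdist[OF C])
    show "closest_point C zb - zb \<in> limiting_subdiff (indicator_fun D) zb"
      by (rule cluster_point_normal[OF that])
  qed simp
  then show ?thesis using bounded_iterates by blast
qed

end
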